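(* Let $I:(0,1)\to(0,1)$ be an increasing bijection satisfying $I(2t)\approx I(t)$ for $t\in(0,\frac12)$, and let $S$ be a sublinear operator defined on $m_I$ (with values in measurable functions on $(0,1)$). If $S$ is bounded on $L^\infty$ and on $m_I$, then $$(Sf)^*(t)\lesssim (S_If)(t),\quad t\in(0,1),$$ for every nonnegative $f\in m_I$. If, in addition, $\int_0^t\frac{ds}{I(s)}\lesssim\frac{t}{I(t)}$ for $t\in(0,1)$, then $$(Sf)^{**}(t)\lesssim(S_If)(t)\quad\text{and}\quad (S_If)^{**}(t)\lesssim(S_If)(t),\quad t\in(0,1),$$ for every nonnegative $f\in m_I$. In particular, for an r.i. space $X\subset m_I$ we have $X\in\mathrm{Int}(L^\infty,m_I)$ whenever $S_I$ is bounded on $X$.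
   Context: $f^*$ is the nonincreasing rearrangement on $(0,1)$, $f^{**}(t)=\frac1t\int_0^tf^*$. $\|f\|_{m_I}=\sup_{0<t<1}I(t)f^*(t)$, $m_I$ the functions with finite quasinorm. $S_If(t)=\frac1{I(t)}\sup_{0<s\le t}I(s)f^*(s)$ (which is $\equiv\infty$ if $f\notin m_I$). An operator is bounded on a (quasi-)normed space $X$ if $\|Tf\|_X\lesssim\|f\|_X$. An r.i. space is a rearrangement-invariant Banach function space on $(0,1)$. $X\in\mathrm{Int}(L^\infty,m_I)$ means $L^\infty\subset X\subset m_I$ and every linear operator bounded on both $L^\infty$ and $m_I$ is bounded on $X$. $\lesssim$, $\approx$ denote inequalities up to constants independent of $f$ and $t$. *)

theory Defs
  imports "HOL-Analysis.Analysis"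
begin

(* Underlying measure space: (0,1) with Lebesgue measure. Functions are real-valued
   functions of a real variable; only their values on (0,1) matter. *)
abbreviation M01 :: "real measure" where
  "M01 \<equiv> lebesgue_on {0<..<1::real}"

definition distr_fun :: "(real \<Rightarrow> real) \<Rightarrow> real \<Rightarrow> real" where
  "distr_fun f s = measure lebesgue {x \<in> {0<..<1}. s < \<bar>f x\<bar>}"

definition rearr :: "(real \<Rightarrow> real) \<Rightarrow> real \<Rightarrow> real" where
  "rearr f t = Inf {s. 0 \<le> s \<and> distr_fun f s \<le> t}"

definition rearr_max :: "(real \<Rightarrow> real) \<Rightarrow> real \<Rightarrow> ennreal" where
  "rearr_max f t = (\<integral>\<^sup>+ s \<in> {0<..<t}. ennreal (rearr f s) \<partial>lborel) / ennreal t"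

definition mI_norm :: "(real \<Rightarrow> real) \<Rightarrow> (real \<Rightarrow> real) \<Rightarrow> ennreal" where
  "mI_norm I f = (SUP t\<in>{0<..<1}. ennreal (I t * rearr f t))"

definition mI :: "(real \<Rightarrow> real) \<Rightarrow> (real \<Rightarrow> real) set" where
  "mI I = {f \<in> borel_measurable M01. mI_norm I f < \<infinity>}"

(* S_I f(t) = (1/I(t)) sup_{0<s<=t} I(s) f^*(s)   (finite for f in m_I) *)
definition SI :: "(real \<Rightarrow> real) \<Rightarrow> (real \<Rightarrow> real) \<Rightarrow> real \<Rightarrow> real" where
  "SI I f t = (SUP s\<in>{0<..t}. I s * rearr f s) / I t"

definition Linf_norm :: "(real \<Rightarrow> real) \<Rightarrow> ennreal" where
  "Linf_norm f = (INF C\<in>{C::real. 0 \<le> C \<and> (AE x in M01. \<bar>f x\<bar> \<le> C)}. ennreal C)"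

definition Linf :: "(real \<Rightarrow> real) set" where
  "Linf = {f \<in> borel_measurable M01. Linf_norm f < \<infinity>}"

definition bounded_on ::
  "((real \<Rightarrow> real) \<Rightarrow> ennreal) \<Rightarrow> (real \<Rightarrow> real) set \<Rightarrow>
   ((real \<Rightarrow> real) \<Rightarrow> (real \<Rightarrow> real)) \<Rightarrow> bool" where
  "bounded_on N V T \<longleftrightarrow> (\<exists>C. \<forall>f\<in>V. T f \<in> V \<and> N (T f) \<le> ennreal C * N f)"

definition sublinear_on_mI ::
  "(real \<Rightarrow> real) \<Rightarrow> ((real \<Rightarrow> real) \<Rightarrow> (real \<Rightarrow> real)) \<Rightarrow> bool" where
  "sublinear_on_mI I S \<longleftrightarrow>
     (\<forall>f\<in>mI I. S f \<in> borel_measurable M01) \<and>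
     (\<forall>f\<in>mI I. \<forall>g\<in>mI I. AE x in M01. \<bar>S (\<lambda>y. f y + g y) x\<bar> \<le> \<bar>S f x\<bar> + \<bar>S g x\<bar>) \<and>
     (\<forall>f\<in>mI I. \<forall>a::real. AE x in M01. \<bar>S (\<lambda>y. a * f y) x\<bar> = \<bar>a\<bar> * \<bar>S f x\<bar>)"

definition linear_on_mI ::
  "(real \<Rightarrow> real) \<Rightarrow> ((real \<Rightarrow> real) \<Rightarrow> (real \<Rightarrow> real)) \<Rightarrow> bool" where
  "linear_on_mI I T \<longleftrightarrow>
     (\<forall>f\<in>mI I. T f \<in> borel_measurable M01) \<and>
     (\<forall>f\<in>mI I. \<forall>g\<in>mI I. \<forall>a b::real.
        AE x in M01. T (\<lambda>y. a * f y + b * g y) x = a * T f x + b * T g x)"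

definition NNmeas :: "(real \<Rightarrow> real) set" where
  "NNmeas = {f \<in> borel_measurable M01. \<forall>x\<in>{0<..<1}. 0 \<le> f x}"

(* Banach function norm (Bennett--Sharpley, Def. I.1.1, axioms P1--P5) on (0,1),
   given on nonnegative measurable functions *)
definition function_norm :: "((real \<Rightarrow> real) \<Rightarrow> ennreal) \<Rightarrow> bool" where
  "function_norm \<rho> \<longleftrightarrow>
     (\<forall>f\<in>NNmeas. \<rho> f = 0 \<longleftrightarrow> (AE x in M01. f x = 0)) \<and>
     (\<forall>f\<in>NNmeas. \<forall>a::real. 0 \<le> a \<longrightarrow> \<rho> (\<lambda>x. a * f x) = ennreal a * \<rho> f) \<and>
     (\<forall>f\<in>NNmeas. \<forall>g\<in>NNmeas. \<rho> (\<lambda>x. f x + g x) \<le> \<rho> f + \<rho> g) \<and>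
     (\<forall>f\<in>NNmeas. \<forall>g\<in>NNmeas. (AE x in M01. g x \<le> f x) \<longrightarrow> \<rho> g \<le> \<rho> f) \<and>
     (\<forall>F f. (\<forall>n. F n \<in> NNmeas) \<and> f \<in> NNmeas \<and>
            (AE x in M01. incseq (\<lambda>n. F n x) \<and> (\<lambda>n. F n x) \<longlonglongrightarrow> f x)
            \<longrightarrow> (\<lambda>n. \<rho> (F n)) \<longlonglongrightarrow> \<rho> f) \<and>
     (\<forall>E\<in>sets M01. \<rho> (indicator E) < \<infinity>) \<and>
     (\<forall>E\<in>sets M01. \<exists>C::real. \<forall>f\<in>NNmeas.
        (\<integral>\<^sup>+ x \<in> E. ennreal (f x) \<partial>M01) \<le> ennreal C * \<rho> f)"

definition ri_norm :: "((real \<Rightarrow> real) \<Rightarrow> ennreal) \<Rightarrow> bool" where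
  "ri_norm \<rho> \<longleftrightarrow> function_norm \<rho> \<and>
     (\<forall>f\<in>NNmeas. \<forall>g\<in>NNmeas. (\<forall>s\<ge>0. distr_fun f s = distr_fun g s) \<longrightarrow> \<rho> f = \<rho> g)"

definition Xnorm :: "((real \<Rightarrow> real) \<Rightarrow> ennreal) \<Rightarrow> (real \<Rightarrow> real) \<Rightarrow> ennreal" where
  "Xnorm \<rho> f = \<rho> (\<lambda>x. \<bar>f x\<bar>)"

definition Xspace :: "((real \<Rightarrow> real) \<Rightarrow> ennreal) \<Rightarrow> (real \<Rightarrow> real) set" where
  "Xspace \<rho> = {f \<in> borel_measurable M01. Xnorm \<rho> f < \<infinity>}"

definition Int_Linf_mI :: "(real \<Rightarrow> real) \<Rightarrow> ((real \<Rightarrow> real) \<Rightarrow> ennreal) \<Rightarrow> bool" where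
  "Int_Linf_mI I \<rho> \<longleftrightarrow> Linf \<subseteq> Xspace \<rho> \<and> Xspace \<rho> \<subseteq> mI I \<and>
     (\<forall>T. linear_on_mI I T \<and> bounded_on Linf_norm Linf T \<and> bounded_on (mI_norm I) (mI I) T
          \<longrightarrow> bounded_on (Xnorm \<rho>) (Xspace \<rho>) T)"

end

theory Submission
  imports Defs
begin

(*
  Fix t and cut f at the height a = f^*(t): f = g + h with h = max (-a) (min f a).
  Then ||h||_oo <= a <= S_I f(t), while g vanishes outside the set {|f| > a}, of measure at most t,
  so ||g||_{m_I} <= sup_{0<s<=t} I(s) f^*(s) = I(t) S_I f(t).  Sublinearity gives
  (Sf)^*(t) <= (Sg)^*(t/2) + (Sh)^*(t/2), and the two boundedness hypotheses together with
  I(t) <~ I(t/2) bound both terms by a multiple of S_I f(t).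
  For the averages, integrate (Sf)^*(s) <~ I(t) S_I f(t) / I(s) and
  (S_I f)^*(s) <= S_I f(t) + I(t) S_I f(t) / I(s) over (0,t) and use the hypothesis on 1/I.
  Finally, for an r.i. norm, (Tf)^* <~ S_I f turns boundedness of S_I on X into boundedness of T.
*)

section \<open>Distribution function and nonincreasing rearrangement\<close>

lemma finite_measure_M01: "finite_measure M01"
  by (rule finite_measure_lebesgue_on) auto

lemma Ioo_in_sets_M01: "0 \<le> a \<Longrightarrow> b \<le> 1 \<Longrightarrow> {a<..<b} \<in> sets M01"
  by (subst sets_restrict_space_iff) auto

lemma measure_M01_Ioo: "0 \<le> a \<Longrightarrow> a \<le> b \<Longrightarrow> b \<le> 1 \<Longrightarrow> measure M01 {a<..<b} = b - a"
  by (subst measure_restrict_space) auto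

lemma borel_measurable_M01_if_mono_on:
  fixes f :: "real \<Rightarrow> real"
  assumes "mono_on {0<..<1} f"
  shows "f \<in> borel_measurable M01"
proof -
  have "space lborel = space lebesgue" "sets borel \<subseteq> sets lebesgue"
    by force+
  then show ?thesis
    by (metis assms borel_measurable_mono_on_fnc borel_measurable_subalgebra mono_restrict_space
        space_lborel space_restrict_space)
qed

lemma distr_fun_eq_measure: "distr_fun f s = measure M01 {x\<in>{0<..<1}. s < \<bar>f x\<bar>}"
  unfolding distr_fun_def by (subst measure_restrict_space) auto

lemma distr_fun_nonneg: "0 \<le> distr_fun f s"
  unfolding distr_fun_def by simp

lemma distr_fun_le_1: "distr_fun f s \<le> 1"
proof -
  have "distr_fun f s \<le> measure M01 (space M01)"
    unfolding distr_fun_eq_measure by (rule finite_measure.bounded_measure[OF finite_measure_M01])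
  also have "\<dots> = 1" using measure_M01_Ioo[of 0 1] by simp
  finally show ?thesis .
qed

lemma superlevel_set_in_sets_M01:
  fixes g :: "real \<Rightarrow> real"
  assumes "g \<in> borel_measurable M01"
  shows "{x\<in>{0<..<1}. s < \<bar>g x\<bar>} \<in> sets M01"
proof -
  have "(\<lambda>x. \<bar>g x\<bar>) -` {s<..} \<inter> space M01 \<in> sets M01"
    using assms by (intro measurable_sets[OF borel_measurable_abs]) auto
  moreover have "(\<lambda>x. \<bar>g x\<bar>) -` {s<..} \<inter> space M01 = {x\<in>{0<..<1}. s < \<bar>g x\<bar>}" by auto
  ultimately show ?thesis by simp
qed

lemma distr_fun_le_measure:
  assumes "AE x in M01. s < \<bar>g x\<bar> \<longrightarrow> x \<in> B" and B: "B \<in> sets M01"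
  shows "distr_fun g s \<le> measure M01 B"
proof -
  obtain N where N: "{x\<in>{0<..<1}. \<not> (s < \<bar>g x\<bar> \<longrightarrow> x \<in> B)} \<subseteq> N"
      "emeasure M01 N = 0" "N \<in> sets M01"
    using assms(1) by (auto elim!: AE_E)
  have "distr_fun g s \<le> measure M01 (B \<union> N)"
  proof (cases "{x\<in>{0<..<1}. s < \<bar>g x\<bar>} \<in> sets M01")
    case True
    then show ?thesis
      unfolding distr_fun_eq_measure using N B
      by (intro finite_measure.finite_measure_mono[OF finite_measure_M01]) auto
  qed (simp add: distr_fun_eq_measure measure_notin_sets)
  also have "\<dots> \<le> measure M01 B + measure M01 N"
    using N B by (intro measure_subadditive) (auto simp: finite_measure.emeasure_finite[OF finite_measure_M01])
  also have "measure M01 N = 0"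
    using N by (simp add: measure_def)
  finally show ?thesis by simp
qed

lemma distr_fun_antimono:
  assumes "g \<in> borel_measurable M01" "s \<le> s'"
  shows "distr_fun g s' \<le> distr_fun g s"
  unfolding distr_fun_eq_measure[of g s]
  using assms by (intro distr_fun_le_measure superlevel_set_in_sets_M01) auto

lemma distr_fun_sum_le:
  fixes u v w :: "real \<Rightarrow> real"
  assumes u: "u \<in> borel_measurable M01" and v: "v \<in> borel_measurable M01"
    and uvw: "AE x in M01. \<bar>w x\<bar> \<le> \<bar>u x\<bar> + \<bar>v x\<bar>"
  shows "distr_fun w (a + b) \<le> distr_fun u a + distr_fun v b"
proof -
  define U where "U = {x\<in>{0<..<1}. a < \<bar>u x\<bar>}"
  define V where "V = {x\<in>{0<..<1}. b < \<bar>v x\<bar>}"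
  have UV: "U \<in> sets M01" "V \<in> sets M01"
    unfolding U_def V_def using u v by (simp_all only: superlevel_set_in_sets_M01)
  have "distr_fun w (a + b) \<le> measure M01 (U \<union> V)"
  proof (rule distr_fun_le_measure[OF AE_mp[OF uvw AE_I2]])
    show "x \<in> space M01 \<Longrightarrow> \<bar>w x\<bar> \<le> \<bar>u x\<bar> + \<bar>v x\<bar> \<longrightarrow> a + b < \<bar>w x\<bar> \<longrightarrow> x \<in> U \<union> V" for x
      by (auto simp: U_def V_def)
  qed (use UV in auto)
  also have "\<dots> \<le> measure M01 U + measure M01 V"
    using UV by (intro measure_subadditive) (auto simp: finite_measure.emeasure_finite[OF finite_measure_M01])
  finally show ?thesis
    unfolding U_def V_def distr_fun_eq_measure .
qed

lemma distr_fun_tendsto_0: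
  fixes g :: "real \<Rightarrow> real"
  assumes g: "g \<in> borel_measurable M01"
  shows "(\<lambda>n. distr_fun g (real n)) \<longlonglongrightarrow> 0"
proof -
  define A where "A n = {x\<in>{0<..<1}. real n < \<bar>g x\<bar>}" for n
  have "(\<Inter>n. A n) = {}"
    by (auto simp: A_def) (meson reals_Archimedean2 order.asym)
  moreover have "(\<lambda>n. measure M01 (A n)) \<longlonglongrightarrow> measure M01 (\<Inter>n. A n)"
    using superlevel_set_in_sets_M01[OF g]
    by (intro Lim_measure_decseq)
      (auto simp: A_def decseq_def finite_measure.emeasure_finite[OF finite_measure_M01])
  ultimately show ?thesis
    by (simp add: A_def distr_fun_eq_measure)
qed

lemma distr_fun_right_continuous:
  fixes g :: "real \<Rightarrow> real"
  assumes g: "g \<in> borel_measurable M01"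
  shows "(\<lambda>n. distr_fun g (r + 1 / Suc n)) \<longlonglongrightarrow> distr_fun g r"
proof -
  define B where "B n = {x\<in>{0<..<1}. r + 1 / Suc n < \<bar>g x\<bar>}" for n
  have "incseq B"
  proof (rule incseq_SucI)
    fix n
    have "1 / real (Suc (Suc n)) \<le> 1 / Suc n" by (simp add: frac_le)
    then show "B n \<subseteq> B (Suc n)" unfolding B_def by auto
  qed
  moreover have "(\<Union>n. B n) = {x\<in>{0<..<1}. r < \<bar>g x\<bar>}"
  proof (intro equalityI subsetI)
    fix x assume x: "x \<in> {x\<in>{0<..<1}. r < \<bar>g x\<bar>}"
    then obtain n where "1 / real (Suc n) < \<bar>g x\<bar> - r"
      using nat_approx_posE[of "\<bar>g x\<bar> - r"] by auto
    then have "x \<in> B n" using x unfolding B_def by auto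
    then show "x \<in> (\<Union>n. B n)" by blast
  qed (auto simp: B_def, smt (verit) of_nat_0_le_iff divide_nonneg_nonneg)
  ultimately show ?thesis
    using superlevel_set_in_sets_M01[OF g] Lim_measure_incseq[of B M01]
    by (simp add: B_def distr_fun_eq_measure image_subset_iff
        finite_measure.emeasure_finite[OF finite_measure_M01])
qed

lemma rearr_le:
  assumes "0 \<le> s" "distr_fun g s \<le> t"
  shows "rearr g t \<le> s"
  unfolding rearr_def using assms by (intro cInf_lower bdd_belowI[of _ 0]) auto

lemma rearr_defining_set_nonempty:
  fixes g :: "real \<Rightarrow> real"
  assumes g: "g \<in> borel_measurable M01" and t: "0 < t"
  shows "{s. 0 \<le> s \<and> distr_fun g s \<le> t} \<noteq> {}"
proof -
  obtain N where "\<forall>n\<ge>N. distr_fun g (real n) < t"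
    using order_tendstoD(2)[OF distr_fun_tendsto_0[OF g] t] unfolding eventually_sequentially ..
  then have "distr_fun g (real N) < t" by simp
  then show ?thesis by (auto intro!: exI[of _ "real N"])
qed

lemma rearr_nonneg:
  assumes "g \<in> borel_measurable M01" "0 < t"
  shows "0 \<le> rearr g t"
  unfolding rearr_def using rearr_defining_set_nonempty[OF assms] by (rule cInf_greatest) auto

lemma distr_fun_rearr_le:
  fixes g :: "real \<Rightarrow> real"
  assumes g: "g \<in> borel_measurable M01" and t: "0 < t"
  shows "distr_fun g (rearr g t) \<le> t"
proof -
  have "distr_fun g (rearr g t + 1 / Suc n) \<le> t" for n
  proof -
    have "Inf {s. 0 \<le> s \<and> distr_fun g s \<le> t} < rearr g t + 1 / Suc n"
      unfolding rearr_def by simp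
    then obtain s where s: "0 \<le> s" "distr_fun g s \<le> t" "s < rearr g t + 1 / Suc n"
      using cInf_lessD[OF rearr_defining_set_nonempty[OF g t]] by blast
    then have "distr_fun g (rearr g t + 1 / Suc n) \<le> distr_fun g s"
      by (intro distr_fun_antimono[OF g]) auto
    with s show ?thesis by linarith
  qed
  then show ?thesis
    by (intro LIMSEQ_le_const2[OF distr_fun_right_continuous[OF g]]) blast
qed

lemma rearr_antimono:
  assumes "g \<in> borel_measurable M01" "0 < t" "t \<le> t'"
  shows "rearr g t' \<le> rearr g t"
  using assms distr_fun_rearr_le[OF assms(1,2)] rearr_nonneg[OF assms(1,2)] by (intro rearr_le) auto

lemma less_rearr_iff:
  assumes g: "g \<in> borel_measurable M01" and "0 < t" "0 \<le> s"
  shows "s < rearr g t \<longleftrightarrow> t < distr_fun g s"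
proof
  assume "t < distr_fun g s"
  moreover have "rearr g t \<le> s \<Longrightarrow> distr_fun g s \<le> distr_fun g (rearr g t)"
    by (rule distr_fun_antimono[OF g])
  ultimately show "s < rearr g t"
    using distr_fun_rearr_le[OF g \<open>0 < t\<close>] by linarith
qed (use rearr_le[OF \<open>0 \<le> s\<close>, of g t] in linarith)

lemma rearr_le_of_AE_le:
  assumes "AE x in M01. \<bar>g x\<bar> \<le> C" "0 \<le> C" "0 \<le> t"
  shows "rearr g t \<le> C"
proof (rule rearr_le[OF \<open>0 \<le> C\<close>])
  have "distr_fun g C \<le> measure M01 {}"
    using assms(1) by (intro distr_fun_le_measure) (auto elim!: eventually_mono)
  then show "distr_fun g C \<le> t" using \<open>0 \<le> t\<close> by simp
qed

lemma rearr_le_of_Linf_norm_le: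
  assumes "Linf_norm g \<le> ennreal B" "0 \<le> B" "0 \<le> t"
  shows "rearr g t \<le> B"
proof -
  have "ennreal (rearr g t) \<le> Linf_norm g"
    unfolding Linf_norm_def using \<open>0 \<le> t\<close> by (auto intro!: INF_greatest rearr_le_of_AE_le)
  with assms show ?thesis by (metis ennreal_le_iff order_trans)
qed

lemma rearr_mono:
  assumes w: "w \<in> borel_measurable M01" and uw: "\<And>x. x \<in> {0<..<1} \<Longrightarrow> \<bar>u x\<bar> \<le> \<bar>w x\<bar>"
    and t: "0 < t"
  shows "rearr u t \<le> rearr w t"
proof (rule rearr_le[OF rearr_nonneg[OF w t]])
  have "distr_fun u (rearr w t) \<le> distr_fun w (rearr w t)"
    unfolding distr_fun_eq_measure[of w] using uw
    by (intro distr_fun_le_measure superlevel_set_in_sets_M01[OF w] AE_I2) force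
  also have "\<dots> \<le> t" by (rule distr_fun_rearr_le[OF w t])
  finally show "distr_fun u (rearr w t) \<le> t" .
qed

lemma rearr_sum_le:
  fixes u v w :: "real \<Rightarrow> real"
  assumes u: "u \<in> borel_measurable M01" and v: "v \<in> borel_measurable M01"
    and uvw: "AE x in M01. \<bar>w x\<bar> \<le> \<bar>u x\<bar> + \<bar>v x\<bar>" and t: "0 < t"
  shows "rearr w t \<le> rearr u (t/2) + rearr v (t/2)"
proof (rule rearr_le)
  have "distr_fun w (rearr u (t/2) + rearr v (t/2)) \<le> distr_fun u (rearr u (t/2)) + distr_fun v (rearr v (t/2))"
    by (rule distr_fun_sum_le[OF u v uvw])
  also have "\<dots> \<le> t/2 + t/2"
    using t by (intro add_mono distr_fun_rearr_le u v) auto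
  finally show "distr_fun w (rearr u (t/2) + rearr v (t/2)) \<le> t" by simp
qed (use t in \<open>simp add: rearr_nonneg u v\<close>)

lemma rearr_measurable:
  assumes g: "g \<in> borel_measurable M01"
  shows "rearr g \<in> borel_measurable M01"
proof -
  have "mono_on {0<..<1} (\<lambda>x. - rearr g x)"
    by (rule mono_onI) (use rearr_antimono[OF g] in auto)
  then have "(\<lambda>x. - (- rearr g x)) \<in> borel_measurable M01"
    by (intro borel_measurable_uminus borel_measurable_M01_if_mono_on)
  then show ?thesis by simp
qed

lemma distr_fun_rearr:
  assumes g: "g \<in> borel_measurable M01" and s: "0 \<le> s"
  shows "distr_fun (rearr g) s = distr_fun g s"
proof -
  have "{x\<in>{0<..<1}. s < \<bar>rearr g x\<bar>} = {0<..<distr_fun g s}"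
    using less_rearr_iff[OF g _ s] rearr_nonneg[OF g] distr_fun_le_1[of g s]
    by auto
  then show ?thesis
    unfolding distr_fun_eq_measure[of "rearr g"]
    using measure_M01_Ioo[of 0 "distr_fun g s"] distr_fun_le_1 distr_fun_nonneg by simp
qed

section \<open>Sublinear operators, truncation and rearrangement-invariant norms\<close>

lemma bounded_onE:
  assumes "bounded_on N V T"
  obtains C where "0 \<le> C" "\<And>f. f \<in> V \<Longrightarrow> N (T f) \<le> ennreal C * N f"
proof -
  obtain C where C: "\<And>f. f \<in> V \<Longrightarrow> N (T f) \<le> ennreal C * N f"
    using assms unfolding bounded_on_def by blast
  have "ennreal C * N f \<le> ennreal (max C 0) * N f" for f
    by (intro mult_right_mono ennreal_leI) auto
  with C show thesis
    by (intro that[of "max C 0"]) (auto intro: order_trans)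
qed

lemma ennreal_mult_bound:
  assumes "x \<le> ennreal C * y" "y \<le> ennreal B" "0 \<le> C" "0 \<le> B"
  shows "x \<le> ennreal (C * B)"
  using order_trans[OF assms(1) mult_left_mono[OF assms(2)]] assms(3,4) by (simp add: ennreal_mult)

lemma mI_measurable: "f \<in> mI I \<Longrightarrow> f \<in> borel_measurable M01"
  unfolding mI_def by auto

lemma mI_if_mI_norm_le: "f \<in> borel_measurable M01 \<Longrightarrow> mI_norm I f \<le> ennreal B \<Longrightarrow> f \<in> mI I"
  unfolding mI_def by (auto simp: top.not_eq_extremum intro: le_less_trans)

lemma weighted_rearr_le_mI_norm: "s \<in> {0<..<1} \<Longrightarrow> ennreal (I s * rearr f s) \<le> mI_norm I f"
  unfolding mI_norm_def by (rule SUP_upper)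

lemma sublinear_on_mI_if_linear:
  assumes "linear_on_mI I T"
  shows "sublinear_on_mI I T"
proof -
  have lin: "AE x in M01. T (\<lambda>y. a * f y + b * g y) x = a * T f x + b * T g x"
    if "f \<in> mI I" "g \<in> mI I" for f g a b
    using assms that unfolding linear_on_mI_def by blast
  have "AE x in M01. \<bar>T (\<lambda>y. f y + g y) x\<bar> \<le> \<bar>T f x\<bar> + \<bar>T g x\<bar>" if "f \<in> mI I" "g \<in> mI I" for f g
    using lin[OF that, of 1 1] by eventually_elim (simp add: abs_triangle_ineq)
  moreover have "AE x in M01. \<bar>T (\<lambda>y. a * f y) x\<bar> = \<bar>a\<bar> * \<bar>T f x\<bar>" if "f \<in> mI I" for f a
    using lin[OF that that, of a 0] by eventually_elim (simp add: abs_mult)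
  moreover have "\<forall>f\<in>mI I. T f \<in> borel_measurable M01"
    using assms unfolding linear_on_mI_def by blast
  ultimately show ?thesis
    unfolding sublinear_on_mI_def by blast
qed

lemma rearr_sublinear_add_le:
  assumes S: "sublinear_on_mI I S" and gh: "g \<in> mI I" "h \<in> mI I" and t: "0 < t"
  shows "rearr (S (\<lambda>x. g x + h x)) t \<le> rearr (S g) (t/2) + rearr (S h) (t/2)"
proof -
  have "S g \<in> borel_measurable M01" "S h \<in> borel_measurable M01"
    and "AE x in M01. \<bar>S (\<lambda>x. g x + h x) x\<bar> \<le> \<bar>S g x\<bar> + \<bar>S h x\<bar>"
    using S gh unfolding sublinear_on_mI_def by blast+
  then show ?thesis using t by (rule rearr_sum_le)
qed

definition truncate :: "real \<Rightarrow> (real \<Rightarrow> real) \<Rightarrow> real \<Rightarrow> real" where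
  "truncate a f x = max (- a) (min (f x) a)"

lemma truncate_measurable:
  assumes "f \<in> borel_measurable M01"
  shows "truncate a f \<in> borel_measurable M01"
  unfolding truncate_def using assms by measurable

lemma abs_truncate_le: "0 \<le> a \<Longrightarrow> \<bar>truncate a f x\<bar> \<le> a"
  unfolding truncate_def by auto

lemma abs_sub_truncate_le: "0 \<le> a \<Longrightarrow> \<bar>f x - truncate a f x\<bar> \<le> \<bar>f x\<bar>"
  unfolding truncate_def by auto

lemma less_abs_if_truncate_neq: "f x \<noteq> truncate a f x \<Longrightarrow> a < \<bar>f x\<bar>"
  unfolding truncate_def by auto

lemma Linf_norm_truncate_le: "0 \<le> a \<Longrightarrow> Linf_norm (truncate a f) \<le> ennreal a"
  unfolding Linf_norm_def by (rule INF_lower) (auto simp: abs_truncate_le)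

lemma truncate_in_Linf:
  assumes "f \<in> borel_measurable M01" "0 \<le> a"
  shows "truncate a f \<in> Linf"
  unfolding Linf_def using assms Linf_norm_truncate_le[of a f]
  by (auto simp: truncate_measurable top.not_eq_extremum intro: le_less_trans)

lemma
  assumes "function_norm \<rho>"
  shows function_norm_cmult: "f \<in> NNmeas \<Longrightarrow> 0 \<le> a \<Longrightarrow> \<rho> (\<lambda>x. a * f x) = ennreal a * \<rho> f"
    and function_norm_mono: "f \<in> NNmeas \<Longrightarrow> g \<in> NNmeas \<Longrightarrow> (AE x in M01. g x \<le> f x) \<Longrightarrow> \<rho> g \<le> \<rho> f"
    and function_norm_indicator_less_top: "E \<in> sets M01 \<Longrightarrow> \<rho> (indicator E) < \<infinity>"
  using assms unfolding function_norm_def by blast+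

lemma NNmeasI: "f \<in> borel_measurable M01 \<Longrightarrow> (\<And>x. x \<in> {0<..<1} \<Longrightarrow> 0 \<le> f x) \<Longrightarrow> f \<in> NNmeas"
  unfolding NNmeas_def by auto

lemma Linf_subset_Xspace:
  assumes \<rho>: "function_norm \<rho>"
  shows "Linf \<subseteq> Xspace \<rho>"
proof
  fix f assume f: "f \<in> Linf"
  then have fm: "f \<in> borel_measurable M01" unfolding Linf_def by auto
  from f have "Linf_norm f < \<infinity>" unfolding Linf_def by auto
  then have "{C::real. 0 \<le> C \<and> (AE x in M01. \<bar>f x\<bar> \<le> C)} \<noteq> {}"
    unfolding Linf_norm_def by (metis INF_empty infinity_ennreal_def less_irrefl)
  then obtain C where C: "0 \<le> C" "AE x in M01. \<bar>f x\<bar> \<le> C" by auto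
  define E :: "real set" where "E = {0<..<1}"
  have E: "E \<in> sets M01" unfolding E_def using Ioo_in_sets_M01[of 0 1] by simp
  have "AE x in M01. \<bar>f x\<bar> \<le> C * indicator E x"
    using C(2) by (rule AE_mp) (rule AE_I2, auto simp: E_def)
  then have "Xnorm \<rho> f \<le> \<rho> (\<lambda>x. C * indicator E x)"
    unfolding Xnorm_def using fm E C
    by (intro function_norm_mono[OF \<rho>] NNmeasI) (auto simp: borel_measurable_indicator)
  also have "\<dots> = ennreal C * \<rho> (indicator E)"
    using E C(1) by (intro function_norm_cmult[OF \<rho>] NNmeasI) (auto simp: borel_measurable_indicator)
  also have "\<dots> < \<infinity>"
    using function_norm_indicator_less_top[OF \<rho> E] by (simp add: ennreal_mult_less_top)
  finally show "f \<in> Xspace \<rho>" unfolding Xspace_def using fm by auto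
qed

lemma Xnorm_le_if_rearr_le:
  assumes \<rho>: "ri_norm \<rho>" and u: "u \<in> borel_measurable M01" and g: "g \<in> borel_measurable M01"
    and ug: "\<And>t. t \<in> {0<..<1} \<Longrightarrow> rearr u t \<le> C * g t" and C: "0 \<le> C"
  shows "Xnorm \<rho> u \<le> ennreal C * Xnorm \<rho> g"
proof -
  have fn: "function_norm \<rho>" using \<rho> unfolding ri_norm_def by simp
  have invariant: "\<And>f g. f \<in> NNmeas \<Longrightarrow> g \<in> NNmeas \<Longrightarrow> (\<forall>s\<ge>0. distr_fun f s = distr_fun g s) \<Longrightarrow> \<rho> f = \<rho> g"
    using \<rho> unfolding ri_norm_def by blast
  have "Xnorm \<rho> u = \<rho> (rearr u)"
    unfolding Xnorm_def
  proof (rule invariant)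
    show "(\<lambda>x. \<bar>u x\<bar>) \<in> NNmeas" "rearr u \<in> NNmeas"
      using u rearr_nonneg[OF u] by (auto intro!: NNmeasI rearr_measurable)
    show "\<forall>s\<ge>0. distr_fun (\<lambda>x. \<bar>u x\<bar>) s = distr_fun (rearr u) s"
      using distr_fun_rearr[OF u] by (simp add: distr_fun_def)
  qed
  also have "\<dots> \<le> \<rho> (\<lambda>x. C * \<bar>g x\<bar>)"
    using u g C ug rearr_nonneg[OF u]
    by (intro function_norm_mono[OF fn] NNmeasI AE_I2 rearr_measurable)
      (auto intro: order_trans[OF _ mult_left_mono[OF abs_ge_self]])
  also have "\<dots> = ennreal C * Xnorm \<rho> g"
    unfolding Xnorm_def using g C by (intro function_norm_cmult[OF fn] NNmeasI) auto
  finally show ?thesis .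
qed

section \<open>Increasing weights and the operator S_I\<close>

locale increasing_weight =
  fixes I :: "real \<Rightarrow> real"
  assumes weight_pos: "t \<in> {0<..<1} \<Longrightarrow> 0 < I t"
    and weight_le_1: "t \<in> {0<..<1} \<Longrightarrow> I t \<le> 1"
    and weight_mono: "0 < s \<Longrightarrow> s \<le> t \<Longrightarrow> t < 1 \<Longrightarrow> I s \<le> I t"
begin

text \<open>The numerator of \<^term>\<open>SI I f t\<close>; as a real supremum it is meaningful only for \<^term>\<open>f \<in> mI I\<close>.\<close>

definition weighted_sup :: "(real \<Rightarrow> real) \<Rightarrow> real \<Rightarrow> real" where
  "weighted_sup f t = (SUP s\<in>{0<..t}. I s * rearr f s)"

lemma SI_eq: "SI I f t = weighted_sup f t / I t"
  unfolding SI_def weighted_sup_def ..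

lemma weighted_sup_eq_SI:
  assumes "t \<in> {0<..<1}"
  shows "weighted_sup f t = I t * SI I f t"
  unfolding SI_eq using weight_pos[OF assms] by simp

lemma rearr_le_of_mI_norm_le:
  assumes "mI_norm I g \<le> ennreal B" "0 \<le> B" and s: "s \<in> {0<..<1}"
  shows "rearr g s \<le> B / I s"
proof -
  have "I s * rearr g s \<le> B"
    using order_trans[OF weighted_rearr_le_mI_norm[OF s] assms(1)] \<open>0 \<le> B\<close> by simp
  then show ?thesis
    using weight_pos[OF s] by (simp add: field_simps)
qed

lemma weighted_sup_bdd_above:
  assumes f: "f \<in> mI I" and t: "t < 1"
  shows "bdd_above ((\<lambda>s. I s * rearr f s) ` {0<..t})"
proof (rule bdd_aboveI)
  have fin: "mI_norm I f = ennreal (enn2real (mI_norm I f))"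
    using f unfolding mI_def by (auto simp: less_top)
  fix y assume "y \<in> (\<lambda>s. I s * rearr f s) ` {0<..t}"
  then obtain s where "s \<in> {0<..t}" "y = I s * rearr f s" by auto
  with t have s: "s \<in> {0<..<1}" and y: "y = I s * rearr f s" by auto
  have "ennreal y \<le> ennreal (enn2real (mI_norm I f))"
    using weighted_rearr_le_mI_norm[OF s, of I f] fin y by simp
  then show "y \<le> enn2real (mI_norm I f)"
    by simp
qed

lemma weighted_sup_upper:
  assumes "f \<in> mI I" "0 < s" "s \<le> t" "t < 1"
  shows "I s * rearr f s \<le> weighted_sup f t"
  unfolding weighted_sup_def using assms by (intro cSUP_upper weighted_sup_bdd_above) auto

lemma weighted_sup_least:
  assumes "0 < t" "\<And>s. 0 < s \<Longrightarrow> s \<le> t \<Longrightarrow> I s * rearr f s \<le> B"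
  shows "weighted_sup f t \<le> B"
  unfolding weighted_sup_def using assms by (intro cSUP_least) auto

lemma weighted_sup_mono:
  assumes "f \<in> mI I" "0 < s" "s \<le> t" "t < 1"
  shows "weighted_sup f s \<le> weighted_sup f t"
  using assms by (intro weighted_sup_least weighted_sup_upper) auto

lemma weighted_sup_nonneg:
  assumes f: "f \<in> mI I" and t: "t \<in> {0<..<1}"
  shows "0 \<le> weighted_sup f t"
proof -
  have "0 \<le> I t * rearr f t"
    using weight_pos[OF t] rearr_nonneg[OF mI_measurable[OF f]] t by simp
  also have "\<dots> \<le> weighted_sup f t"
    using f t by (intro weighted_sup_upper) auto
  finally show ?thesis .
qed

lemma SI_nonneg: "f \<in> mI I \<Longrightarrow> t \<in> {0<..<1} \<Longrightarrow> 0 \<le> SI I f t"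
  unfolding SI_eq using weighted_sup_nonneg weight_pos by (simp add: less_imp_le)

lemma rearr_le_SI:
  assumes f: "f \<in> mI I" and t: "t \<in> {0<..<1}"
  shows "rearr f t \<le> SI I f t"
proof -
  have "I t * rearr f t \<le> weighted_sup f t"
    using f t by (intro weighted_sup_upper) auto
  then show ?thesis
    unfolding SI_eq using weight_pos[OF t] by (simp add: field_simps)
qed

lemma SI_le_weighted_sup:
  assumes "f \<in> mI I" "0 < s" "s \<le> t" "t < 1"
  shows "SI I f s \<le> weighted_sup f t / I s"
  unfolding SI_eq using assms weight_pos[of s]
  by (intro divide_right_mono weighted_sup_mono) auto

lemma SI_antimono:
  assumes f: "f \<in> mI I" and st: "0 < s" "s \<le> t" "t < 1"
  shows "SI I f t \<le> SI I f s"
proof -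
  have s: "s \<in> {0<..<1}" and t: "t \<in> {0<..<1}" using st by auto
  have "weighted_sup f t \<le> I t * SI I f s"
  proof (rule weighted_sup_least)
    fix r assume r: "0 < r" "r \<le> t"
    show "I r * rearr f r \<le> I t * SI I f s"
    proof (cases "r \<le> s")
      case True
      then have "I r * rearr f r \<le> I s * SI I f s"
        using weighted_sup_upper[OF f r(1) True] st weighted_sup_eq_SI[OF s] by auto
      also have "\<dots> \<le> I t * SI I f s"
        using weight_mono[OF st] SI_nonneg[OF f s] by (rule mult_right_mono)
      finally show ?thesis .
    next
      case False
      have "I r * rearr f r \<le> I t * rearr f s"
        using False r st weight_mono[of r t] weight_pos[of r] rearr_nonneg[OF mI_measurable[OF f]]
          rearr_antimono[OF mI_measurable[OF f], of s r]
        by (intro mult_mono) auto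
      also have "\<dots> \<le> I t * SI I f s"
        using rearr_le_SI[OF f s] weight_pos[OF t] by simp
      finally show ?thesis .
    qed
  qed (use st in auto)
  then show ?thesis
    unfolding SI_eq[of f t] using weight_pos[OF t] by (simp add: field_simps)
qed

lemma SI_measurable:
  assumes f: "f \<in> mI I"
  shows "SI I f \<in> borel_measurable M01"
proof -
  have "mono_on {0<..<1} (\<lambda>x. - SI I f x)"
    by (rule mono_onI) (use SI_antimono[OF f] in auto)
  then have "(\<lambda>x. - (- SI I f x)) \<in> borel_measurable M01"
    by (intro borel_measurable_uminus borel_measurable_M01_if_mono_on)
  then show ?thesis by simp
qed

lemma mI_norm_truncate_le:
  assumes "0 \<le> a"
  shows "mI_norm I (truncate a f) \<le> ennreal a"
  unfolding mI_norm_def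
proof (rule SUP_least, rule ennreal_leI)
  fix s :: real assume s: "s \<in> {0<..<1}"
  define r where "r = rearr (truncate a f) s"
  have "r \<le> a"
    unfolding r_def using assms s by (intro rearr_le_of_AE_le AE_I2 abs_truncate_le) auto
  show "I s * r \<le> a"
  proof (cases "0 \<le> r")
    case True
    then have "I s * r \<le> 1 * r"
      using weight_le_1[OF s] by (intro mult_right_mono)
    with \<open>r \<le> a\<close> show ?thesis by simp
  next
    case False
    then have "I s * r \<le> 0"
      using weight_pos[OF s] by (simp add: mult_nonneg_nonpos)
    with assms show ?thesis by simp
  qed
qed

lemma mI_norm_sub_truncate_le:
  assumes f: "f \<in> mI I" and t: "t \<in> {0<..<1}"
  shows "mI_norm I (\<lambda>x. f x - truncate (rearr f t) f x) \<le> ennreal (weighted_sup f t)"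
  unfolding mI_norm_def
proof (rule SUP_least, rule ennreal_leI)
  fix s :: real assume s: "s \<in> {0<..<1}"
  have fm: "f \<in> borel_measurable M01" using mI_measurable[OF f] .
  define g where "g x = f x - truncate (rearr f t) f x" for x
  have a: "0 \<le> rearr f t" using rearr_nonneg[OF fm] t by simp
  show "I s * rearr g s \<le> weighted_sup f t"
  proof (cases "s \<le> t")
    case True
    have "rearr g s \<le> rearr f s"
      using s a by (intro rearr_mono[OF fm]) (auto simp: g_def abs_sub_truncate_le)
    then have "I s * rearr g s \<le> I s * rearr f s"
      using weight_pos[OF s] by simp
    also have "\<dots> \<le> weighted_sup f t"
      using f s t True by (intro weighted_sup_upper) auto
    finally show ?thesis .
  next
    case False
    \<comment> \<open>g vanishes off the set where |f| exceeds f^*(t), whose measure is at most t < s\<close>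
    have "x \<in> {x\<in>{0<..<1}. rearr f t < \<bar>f x\<bar>}" if "x \<in> {0<..<1}" "0 < \<bar>g x\<bar>" for x
      using that less_abs_if_truncate_neq[of f x "rearr f t"] by (auto simp: g_def)
    then have "distr_fun g 0 \<le> distr_fun f (rearr f t)"
      unfolding distr_fun_eq_measure[of f]
      by (intro distr_fun_le_measure superlevel_set_in_sets_M01[OF fm] AE_I2) auto
    also have "\<dots> \<le> s"
      using distr_fun_rearr_le[OF fm, of t] t False by simp
    finally have "rearr g s \<le> 0" by (intro rearr_le) auto
    then have "I s * rearr g s \<le> 0"
      using weight_pos[OF s] by (simp add: mult_nonneg_nonpos)
    then show ?thesis
      using weighted_sup_nonneg[OF f t] by linarith
  qed
qed

lemma rearr_half_le_if_mI_norm_le: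
  assumes doubling: "\<And>u. u \<in> {0<..<1/2} \<Longrightarrow> I (2 * u) \<le> c * I u"
    and g: "mI_norm I g \<le> ennreal B" "0 \<le> B" and t: "t \<in> {0<..<1}"
  shows "rearr g (t/2) \<le> c * B / I t"
proof -
  have t2: "t/2 \<in> {0<..<1}" using t by auto
  have "rearr g (t/2) \<le> B / I (t/2)"
    using g t2 by (rule rearr_le_of_mI_norm_le)
  also have "\<dots> \<le> c * B / I t"
  proof -
    have "I t \<le> c * I (t/2)" using doubling[of "t/2"] t by simp
    then have "B * I t \<le> c * B * I (t/2)"
      using \<open>0 \<le> B\<close> by (metis mult.assoc mult.commute mult_left_mono)
    then show ?thesis
      using weight_pos[OF t] weight_pos[OF t2] by (simp add: field_simps)
  qed
  finally show ?thesis .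
qed

lemma rearr_sublinear_le_SI:
  fixes S :: "(real \<Rightarrow> real) \<Rightarrow> (real \<Rightarrow> real)"
  assumes S: "sublinear_on_mI I S"
    and S_mI: "\<And>f. f \<in> mI I \<Longrightarrow> mI_norm I (S f) \<le> ennreal C\<^sub>m * mI_norm I f" "0 \<le> C\<^sub>m"
    and S_Linf: "\<And>f. f \<in> Linf \<Longrightarrow> Linf_norm (S f) \<le> ennreal C\<^sub>L * Linf_norm f" "0 \<le> C\<^sub>L"
    and doubling: "\<And>u. u \<in> {0<..<1/2} \<Longrightarrow> I (2 * u) \<le> c * I u"
    and f: "f \<in> mI I" and t: "t \<in> {0<..<1}"
  shows "rearr (S f) t \<le> (C\<^sub>m * c + C\<^sub>L) * SI I f t"
proof -
  have fm: "f \<in> borel_measurable M01" using mI_measurable[OF f] .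
  define a where "a = rearr f t"
  define h where "h = truncate a f"
  define g where "g x = f x - h x" for x
  have a: "0 \<le> a" unfolding a_def using rearr_nonneg[OF fm] t by simp
  have h_Linf: "h \<in> Linf" and h_Linf_norm: "Linf_norm h \<le> ennreal a"
    unfolding h_def using truncate_in_Linf[OF fm a] Linf_norm_truncate_le[OF a] by auto
  have h_mI: "h \<in> mI I"
    unfolding h_def using truncate_measurable[OF fm] mI_norm_truncate_le[OF a]
    by (rule mI_if_mI_norm_le)
  have g_norm: "mI_norm I g \<le> ennreal (weighted_sup f t)"
    unfolding g_def h_def a_def using f t by (rule mI_norm_sub_truncate_le)
  have "g \<in> borel_measurable M01"
    unfolding g_def h_def by (intro borel_measurable_diff fm truncate_measurable)
  then have g_mI: "g \<in> mI I"
    using g_norm by (rule mI_if_mI_norm_le)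
  have "f = (\<lambda>x. g x + h x)" by (simp add: g_def)
  then have "rearr (S f) t \<le> rearr (S g) (t/2) + rearr (S h) (t/2)"
    using rearr_sublinear_add_le[OF S g_mI h_mI] t by simp
  also have "rearr (S g) (t/2) \<le> c * (C\<^sub>m * weighted_sup f t) / I t"
    using S_mI weighted_sup_nonneg[OF f t] g_norm
    by (intro rearr_half_le_if_mI_norm_le[OF doubling _ _ t] ennreal_mult_bound[OF S_mI(1)[OF g_mI]])
      auto
  also have "\<dots> = C\<^sub>m * c * SI I f t"
    by (simp add: SI_eq)
  also have "rearr (S h) (t/2) \<le> C\<^sub>L * a"
    using S_Linf a t
    by (intro rearr_le_of_Linf_norm_le ennreal_mult_bound[OF S_Linf(1)[OF h_Linf] h_Linf_norm])
      auto
  also have "C\<^sub>L * a \<le> C\<^sub>L * SI I f t"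
    unfolding a_def using rearr_le_SI[OF f t] S_Linf(2) by (rule mult_left_mono)
  finally show ?thesis by (simp add: distrib_right)
qed

lemma rearr_le_SI_if_bounded:
  fixes S :: "(real \<Rightarrow> real) \<Rightarrow> (real \<Rightarrow> real)"
  assumes S: "sublinear_on_mI I S" "bounded_on Linf_norm Linf S" "bounded_on (mI_norm I) (mI I) S"
    and doubling: "\<And>u. u \<in> {0<..<1/2} \<Longrightarrow> I (2 * u) \<le> c * I u" "0 \<le> c"
  shows "\<exists>C>0. \<forall>f\<in>mI I. \<forall>t\<in>{0<..<1}. rearr (S f) t \<le> C * SI I f t"
proof -
  obtain C\<^sub>L where "0 \<le> C\<^sub>L" "\<And>f. f \<in> Linf \<Longrightarrow> Linf_norm (S f) \<le> ennreal C\<^sub>L * Linf_norm f"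
    using bounded_onE[OF S(2)] by blast
  moreover obtain C\<^sub>m where "0 \<le> C\<^sub>m" "\<And>f. f \<in> mI I \<Longrightarrow> mI_norm I (S f) \<le> ennreal C\<^sub>m * mI_norm I f"
    using bounded_onE[OF S(3)] by blast
  ultimately have "rearr (S f) t \<le> (C\<^sub>m * c + C\<^sub>L) * SI I f t" if "f \<in> mI I" "t \<in> {0<..<1}" for f t
    using rearr_sublinear_le_SI[OF S(1) _ _ _ _ doubling(1) that] by blast
  moreover have "(C\<^sub>m * c + C\<^sub>L) * SI I f t \<le> (C\<^sub>m * c + C\<^sub>L + 1) * SI I f t"
    if "f \<in> mI I" "t \<in> {0<..<1}" for f t
    using SI_nonneg[OF that] by (simp add: distrib_right)
  moreover have "0 < C\<^sub>m * c + C\<^sub>L + 1"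
    using \<open>0 \<le> C\<^sub>L\<close> \<open>0 \<le> C\<^sub>m\<close> doubling(2) by (simp add: add_nonneg_pos)
  ultimately show ?thesis by (meson order_trans)
qed

lemma weight_inverse_measurable:
  assumes "t \<le> 1"
  shows "(\<lambda>s. ennreal (1 / I s) * indicator {0<..<t} s) \<in> borel_measurable lborel"
proof -
  have "mono_on {0<..<t} (\<lambda>s. - (1 / I s))"
    using assms weight_mono weight_pos by (intro mono_onI) (simp add: frac_le)
  then have "(\<lambda>s. - (- (1 / I s))) \<in> borel_measurable (restrict_space borel {0<..<t})"
    by (intro borel_measurable_uminus borel_measurable_mono_on_fnc)
  then have "(\<lambda>s. 1 / I s) \<in> borel_measurable (restrict_space borel {0<..<t})"
    by simp
  then have "(\<lambda>s. if s \<in> {0<..<t} then 1 / I s else 0) \<in> borel_measurable borel"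
    by (subst (asm) measurable_restrict_space_iff) auto
  then have "(\<lambda>s. ennreal (if s \<in> {0<..<t} then 1 / I s else 0)) \<in> borel_measurable borel"
    by measurable
  moreover have "(\<lambda>s. ennreal (if s \<in> {0<..<t} then 1 / I s else 0))
      = (\<lambda>s. ennreal (1 / I s) * indicator {0<..<t} s)"
    by (auto simp: indicator_def)
  ultimately show ?thesis by simp
qed

lemma rearr_max_le:
  assumes D: "(\<integral>\<^sup>+ s \<in> {0<..<t}. ennreal (1 / I s) \<partial>lborel) \<le> ennreal (D * t / I t)" "0 \<le> D"
    and t: "t \<in> {0<..<1}" and AB: "0 \<le> A" "0 \<le> B"
    and g: "\<And>s. s \<in> {0<..<t} \<Longrightarrow> rearr g s \<le> A + B / I s"
  shows "rearr_max g t \<le> ennreal (A + B * D / I t)"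
proof -
  have It: "0 < I t" using weight_pos[OF t] .
  have "(\<integral>\<^sup>+ s \<in> {0<..<t}. ennreal (rearr g s) \<partial>lborel)
      \<le> (\<integral>\<^sup>+ s. ennreal A * indicator {0<..<t} s + ennreal B * (ennreal (1 / I s) * indicator {0<..<t} s) \<partial>lborel)"
  proof (intro nn_integral_mono)
    fix s :: real
    show "ennreal (rearr g s) * indicator {0<..<t} s
        \<le> ennreal A * indicator {0<..<t} s + ennreal B * (ennreal (1 / I s) * indicator {0<..<t} s)"
    proof (cases "s \<in> {0<..<t}")
      case True
      then have "0 < I s" using t weight_pos[of s] by auto
      then have "ennreal (rearr g s) \<le> ennreal A + ennreal B * ennreal (1 / I s)"
        using g[OF True] AB by (simp add: ennreal_plus[symmetric] ennreal_mult[symmetric] ennreal_leI del: ennreal_plus)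
      with True show ?thesis by simp
    qed simp
  qed
  also have "\<dots> = ennreal A * ennreal t + ennreal B * (\<integral>\<^sup>+ s \<in> {0<..<t}. ennreal (1 / I s) \<partial>lborel)"
    using weight_inverse_measurable[of t] t
    by (subst nn_integral_add) (auto simp: nn_integral_cmult nn_integral_cmult_indicator)
  also have "\<dots> \<le> ennreal A * ennreal t + ennreal B * ennreal (D * t / I t)"
    by (intro add_left_mono mult_left_mono D(1)) simp
  also have "\<dots> = ennreal ((A + B * D / I t) * t)"
    using AB D(2) It t by (simp add: ennreal_mult[symmetric] ennreal_plus[symmetric] field_simps del: ennreal_plus)
  finally have "rearr_max g t \<le> ennreal ((A + B * D / I t) * t) / ennreal t"
    unfolding rearr_max_def by (rule divide_right_mono_ennreal)
  also have "\<dots> = ennreal (A + B * D / I t)"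
    using t AB D(2) It by (subst divide_ennreal) auto
  finally show ?thesis .
qed

lemma rearr_SI_le:
  assumes f: "f \<in> mI I" and st: "0 < s" "s \<le> t" "t < 1"
  shows "rearr (SI I f) s \<le> SI I f t + weighted_sup f t / I s"
proof (rule rearr_le)
  have s: "s \<in> {0<..<1}" and t: "t \<in> {0<..<1}" using st by auto
  show "0 \<le> SI I f t + weighted_sup f t / I s"
    using SI_nonneg[OF f t] weighted_sup_nonneg[OF f t] weight_pos[OF s] by simp
  \<comment> \<open>on [s,t] use the bound by weighted_sup f t, on [t,1) that S_I f is nonincreasing\<close>
  have "SI I f x \<le> SI I f t + weighted_sup f t / I s" if x: "x \<in> {0<..<1}" "s \<le> x" for x
  proof (cases "t \<le> x")
    case True
    have "0 \<le> weighted_sup f t / I s"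
      using weighted_sup_nonneg[OF f t] weight_pos[OF s] by simp
    then show ?thesis
      using SI_antimono[OF f _ True] x st by simp
  next
    case False
    have "SI I f x \<le> weighted_sup f t / I x"
      using False x st by (intro SI_le_weighted_sup[OF f]) auto
    also have "\<dots> \<le> weighted_sup f t / I s"
      using weighted_sup_nonneg[OF f t] weight_pos[OF s] weight_mono[of s x] x st
      by (intro divide_left_mono) auto
    finally show ?thesis
      using SI_nonneg[OF f t] by simp
  qed
  then have "AE x in M01. SI I f t + weighted_sup f t / I s < \<bar>SI I f x\<bar> \<longrightarrow> x \<in> {0<..<s}"
    using SI_nonneg[OF f] by (intro AE_I2) force
  then have "distr_fun (SI I f) (SI I f t + weighted_sup f t / I s) \<le> measure M01 {0<..<s}"
    using st by (intro distr_fun_le_measure Ioo_in_sets_M01) auto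
  then show "distr_fun (SI I f) (SI I f t + weighted_sup f t / I s) \<le> s"
    using measure_M01_Ioo[of 0 s] st by simp
qed

lemma rearr_max_le_SI:
  fixes S :: "(real \<Rightarrow> real) \<Rightarrow> (real \<Rightarrow> real)"
  assumes S: "\<And>f t. f \<in> mI I \<Longrightarrow> t \<in> {0<..<1} \<Longrightarrow> rearr (S f) t \<le> C * SI I f t" "0 \<le> C"
    and D: "\<And>t. t \<in> {0<..<1} \<Longrightarrow> (\<integral>\<^sup>+ s \<in> {0<..<t}. ennreal (1 / I s) \<partial>lborel) \<le> ennreal (D * t / I t)"
      "0 \<le> D"
    and f: "f \<in> mI I" and t: "t \<in> {0<..<1}"
  shows "rearr_max (S f) t \<le> ennreal (C * D * SI I f t)"
    and "rearr_max (SI I f) t \<le> ennreal ((1 + D) * SI I f t)"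
proof -
  have "I t \<noteq> 0" using weight_pos[OF t] by simp
  have rearr_Sf: "rearr (S f) s \<le> 0 + C * weighted_sup f t / I s" if "s \<in> {0<..<t}" for s
  proof -
    have "rearr (S f) s \<le> C * SI I f s" using S(1)[OF f] that t by simp
    also have "\<dots> \<le> C * (weighted_sup f t / I s)"
      using that t by (intro mult_left_mono SI_le_weighted_sup[OF f] S(2)) auto
    finally show ?thesis by simp
  qed
  show "rearr_max (S f) t \<le> ennreal (C * D * SI I f t)"
    using rearr_max_le[OF D(1)[OF t] D(2) t _ _ rearr_Sf] S(2) weighted_sup_nonneg[OF f t]
    by (simp add: weighted_sup_eq_SI[OF t] \<open>I t \<noteq> 0\<close> mult_ac)
  have rearr_SIf: "rearr (SI I f) s \<le> SI I f t + weighted_sup f t / I s" if "s \<in> {0<..<t}" for s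
    using rearr_SI_le[OF f] that t by auto
  show "rearr_max (SI I f) t \<le> ennreal ((1 + D) * SI I f t)"
    using rearr_max_le[OF D(1)[OF t] D(2) t _ _ rearr_SIf]
      SI_nonneg[OF f t] weighted_sup_nonneg[OF f t]
    by (simp add: weighted_sup_eq_SI[OF t] \<open>I t \<noteq> 0\<close> algebra_simps)
qed

lemma rearr_max_le_SI_if_bounded:
  fixes S :: "(real \<Rightarrow> real) \<Rightarrow> (real \<Rightarrow> real)"
  assumes S: "\<And>f t. f \<in> mI I \<Longrightarrow> t \<in> {0<..<1} \<Longrightarrow> rearr (S f) t \<le> C * SI I f t" "0 \<le> C"
    and D: "\<And>t. t \<in> {0<..<1} \<Longrightarrow> (\<integral>\<^sup>+ s \<in> {0<..<t}. ennreal (1 / I s) \<partial>lborel) \<le> ennreal (D * t / I t)"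
  shows "\<exists>C'>0. \<forall>f\<in>mI I. \<forall>t\<in>{0<..<1}. rearr_max (S f) t \<le> ennreal (C' * SI I f t)
                                    \<and> rearr_max (SI I f) t \<le> ennreal (C' * SI I f t)"
proof -
  define D' where "D' = max D 0"
  have D': "(\<integral>\<^sup>+ s \<in> {0<..<t}. ennreal (1 / I s) \<partial>lborel) \<le> ennreal (D' * t / I t)"
    if t: "t \<in> {0<..<1}" for t
  proof -
    have "D * t / I t \<le> D' * t / I t"
      using weight_pos[OF t] t by (auto simp: D'_def intro!: divide_right_mono mult_right_mono)
    then show ?thesis using D[OF t] by (metis ennreal_leI order_trans)
  qed
  have "0 \<le> D'" by (simp add: D'_def)
  define C' where "C' = C * D' + 1 + D'"
  have "rearr_max (S f) t \<le> ennreal (C' * SI I f t) \<and> rearr_max (SI I f) t \<le> ennreal (C' * SI I f t)"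
    if "f \<in> mI I" "t \<in> {0<..<1}" for f t
  proof -
    have "C * D' * SI I f t \<le> C' * SI I f t" "(1 + D') * SI I f t \<le> C' * SI I f t"
      using SI_nonneg[OF that] S(2) \<open>0 \<le> D'\<close> by (auto simp: C'_def intro!: mult_right_mono)
    with rearr_max_le_SI[OF S D' \<open>0 \<le> D'\<close> that] show ?thesis
      by (meson ennreal_leI order_trans)
  qed
  moreover have "0 < C'"
    unfolding C'_def using S(2) \<open>0 \<le> D'\<close> by (intro add_pos_nonneg add_nonneg_pos mult_nonneg_nonneg) auto
  ultimately show ?thesis by blast
qed

lemma bounded_on_Xspace_if_rearr_le_SI:
  fixes T :: "(real \<Rightarrow> real) \<Rightarrow> (real \<Rightarrow> real)"
  assumes \<rho>: "ri_norm \<rho>" and X_mI: "Xspace \<rho> \<subseteq> mI I"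
    and SI_X: "bounded_on (Xnorm \<rho>) (Xspace \<rho>) (SI I)"
    and T: "\<And>f. f \<in> mI I \<Longrightarrow> T f \<in> borel_measurable M01"
      "\<And>f t. f \<in> mI I \<Longrightarrow> t \<in> {0<..<1} \<Longrightarrow> rearr (T f) t \<le> C * SI I f t" "0 \<le> C"
  shows "bounded_on (Xnorm \<rho>) (Xspace \<rho>) T"
proof -
  obtain C\<^sub>S where C\<^sub>S: "0 \<le> C\<^sub>S" "\<And>f. f \<in> Xspace \<rho> \<Longrightarrow> Xnorm \<rho> (SI I f) \<le> ennreal C\<^sub>S * Xnorm \<rho> f"
    using bounded_onE[OF SI_X] by blast
  have "T f \<in> Xspace \<rho> \<and> Xnorm \<rho> (T f) \<le> ennreal (C * C\<^sub>S) * Xnorm \<rho> f" if f: "f \<in> Xspace \<rho>" for f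
  proof -
    have "f \<in> mI I" using f X_mI by auto
    have "Xnorm \<rho> (T f) \<le> ennreal C * Xnorm \<rho> (SI I f)"
      using T \<open>f \<in> mI I\<close> by (intro Xnorm_le_if_rearr_le[OF \<rho>] SI_measurable) auto
    also have "\<dots> \<le> ennreal C * (ennreal C\<^sub>S * Xnorm \<rho> f)"
      using C\<^sub>S(2)[OF f] by (rule mult_left_mono) simp
    finally have bound: "Xnorm \<rho> (T f) \<le> ennreal (C * C\<^sub>S) * Xnorm \<rho> f"
      using T(3) C\<^sub>S(1) by (simp add: ennreal_mult mult.assoc)
    moreover have "ennreal (C * C\<^sub>S) * Xnorm \<rho> f < \<infinity>"
      using f unfolding Xspace_def by (simp add: ennreal_mult_less_top)
    ultimately show ?thesis
      using T(1)[OF \<open>f \<in> mI I\<close>] unfolding Xspace_def by (auto intro: le_less_trans)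
  qed
  then show ?thesis unfolding bounded_on_def by blast
qed

lemma Int_Linf_mI_if_SI_bounded:
  fixes \<rho> :: "(real \<Rightarrow> real) \<Rightarrow> ennreal"
  assumes doubling: "\<And>u. u \<in> {0<..<1/2} \<Longrightarrow> I (2 * u) \<le> c * I u" "0 \<le> c"
    and \<rho>: "ri_norm \<rho>" and X_mI: "Xspace \<rho> \<subseteq> mI I"
    and SI_X: "bounded_on (Xnorm \<rho>) (Xspace \<rho>) (SI I)"
  shows "Int_Linf_mI I \<rho>"
proof -
  have "bounded_on (Xnorm \<rho>) (Xspace \<rho>) T"
    if T: "linear_on_mI I T" "bounded_on Linf_norm Linf T" "bounded_on (mI_norm I) (mI I) T" for T
  proof -
    obtain C where "0 < C" "\<And>f t. f \<in> mI I \<Longrightarrow> t \<in> {0<..<1} \<Longrightarrow> rearr (T f) t \<le> C * SI I f t"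
      using rearr_le_SI_if_bounded[OF sublinear_on_mI_if_linear[OF T(1)] T(2,3) doubling] by blast
    moreover have "\<And>f. f \<in> mI I \<Longrightarrow> T f \<in> borel_measurable M01"
      using T(1) unfolding linear_on_mI_def by blast
    ultimately show ?thesis
      by (intro bounded_on_Xspace_if_rearr_le_SI[OF \<rho> X_mI SI_X]) auto
  qed
  then show ?thesis
    unfolding Int_Linf_mI_def using Linf_subset_Xspace \<rho> X_mI by (auto simp: ri_norm_def)
qed

end

lemma increasing_weight_if_bij:
  assumes bij: "bij_betw I {0<..<1} {0<..<1}" and mono: "strict_mono_on {0<..<1} I"
  shows "increasing_weight I"
proof
  fix t :: real assume "t \<in> {0<..<1}"
  then have "I t \<in> {0<..<1}" by (rule bij_betw_apply[OF bij])
  then show "0 < I t" "I t \<le> 1" by auto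
next
  fix s t :: real assume "0 < s" "s \<le> t" "t < 1"
  then show "I s \<le> I t"
    using strict_mono_onD[OF mono, of s t] by (cases "s = t") auto
qed

theorem theorem3p9:
  fixes I :: "real \<Rightarrow> real" and S :: "(real \<Rightarrow> real) \<Rightarrow> (real \<Rightarrow> real)"
  assumes I_bij: "bij_betw I {0<..<1} {0<..<1}"
    and I_incr: "strict_mono_on {0<..<1} I"
    and I_doubling: "\<exists>c>0. \<forall>t\<in>{0<..<1/2}. I (2*t) \<le> c * I t \<and> I t \<le> c * I (2*t)"
    and S_sublinear: "sublinear_on_mI I S"
    and S_Linf: "bounded_on Linf_norm Linf S"
    and S_mI: "bounded_on (mI_norm I) (mI I) S"
  shows "(\<exists>C>0. \<forall>f\<in>mI I. (\<forall>x\<in>{0<..<1}. 0 \<le> f x) \<longrightarrow>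
             (\<forall>t\<in>{0<..<1}. rearr (S f) t \<le> C * SI I f t))
       \<and> ((\<exists>D. \<forall>t\<in>{0<..<1}. (\<integral>\<^sup>+ s \<in> {0<..<t}. ennreal (1 / I s) \<partial>lborel) \<le> ennreal (D * t / I t))
          \<longrightarrow> (\<exists>C>0. \<forall>f\<in>mI I. (\<forall>x\<in>{0<..<1}. 0 \<le> f x) \<longrightarrow>
                (\<forall>t\<in>{0<..<1}. rearr_max (S f) t \<le> ennreal (C * SI I f t)
                              \<and> rearr_max (SI I f) t \<le> ennreal (C * SI I f t))))
       \<and> (\<forall>\<rho>. ri_norm \<rho> \<and> Xspace \<rho> \<subseteq> mI I \<and> bounded_on (Xnorm \<rho>) (Xspace \<rho>) (SI I)
               \<longrightarrow> Int_Linf_mI I \<rho>)"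
proof -
  interpret increasing_weight I
    using I_bij I_incr by (rule increasing_weight_if_bij)
  \<comment> \<open>Only I(t) <~ I(t/2) is needed, and none of the bounds requires f to be nonnegative.\<close>
  obtain c where c: "0 < c" "\<And>u. u \<in> {0<..<1/2} \<Longrightarrow> I (2 * u) \<le> c * I u"
    using I_doubling by auto
  obtain C where C: "0 < C" "\<forall>f\<in>mI I. \<forall>t\<in>{0<..<1}. rearr (S f) t \<le> C * SI I f t"
    using rearr_le_SI_if_bounded[OF S_sublinear S_Linf S_mI c(2)] c(1) by auto
  have averages: "\<exists>C'>0. \<forall>f\<in>mI I. \<forall>t\<in>{0<..<1}. rearr_max (S f) t \<le> ennreal (C' * SI I f t)
                                    \<and> rearr_max (SI I f) t \<le> ennreal (C' * SI I f t)"
    if "\<forall>t\<in>{0<..<1}. (\<integral>\<^sup>+ s \<in> {0<..<t}. ennreal (1 / I s) \<partial>lborel) \<le> ennreal (D * t / I t)" for D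
    using C that by (intro rearr_max_le_SI_if_bounded[of S C D]) auto
  have "Int_Linf_mI I \<rho>"
    if "ri_norm \<rho>" "Xspace \<rho> \<subseteq> mI I" "bounded_on (Xnorm \<rho>) (Xspace \<rho>) (SI I)" for \<rho>
    using c that by (intro Int_Linf_mI_if_SI_bounded[of c]) auto
  with C averages show ?thesis by meson
qed

end
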